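(* Let $X, Y \subseteq \omega$. There exists an embedding $\mathcal{B}^X \hookrightarrow \mathcal{B}^Y$ if and only if $X \le_T Y$.
   Context: A pca is a set with a partial binary application operation containing distinct $\mathrm{s},\mathrm{k}$ with $\mathrm{k}ab\downarrow=a$, $\mathrm{s}ab\downarrow$, $\mathrm{s}abc\simeq(ac)(bc)$. An embedding of pcas is an injective map $f$ with: if $ab$ is defined then $f(a)f(b)$ is defined and equals $f(ab)$. $\mathcal{B}^Z$: elements are the partial $Z$-computable functions $\omega\rightharpoonup\omega$, with $\varphi\cdot\psi$ the partial function $n\mapsto\Phi^{\varphi\oplus\psi}_{\varphi(0)}(n)$, where $\Phi_e$ is the $e$-th Turing functional, $(\varphi\oplus\psi)(2n)\simeq\varphi(n)$, $(\varphi\oplus\psi)(2n+1)\simeq\psi(n)$, and querying the oracle at an undefined point diverges. *)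

theory Defs
  imports Main "HOL-Library.Countable"
begin

text \<open>Codes of partial recursive functions with an orcl call.  Arguments are lists of naturals.\<close>
datatype rf = Zero | Succ | Proj nat | Comp rf "rf list" | Prec rf rf | Mu rf | Orc

instance rf :: countable by countable_datatype

text \<open>Query arguments (type orcl) are partial functions; querying at an undefined point diverges.\<close>
type_synonym orcl = "nat \<Rightarrow> nat option"

inductive ev :: "orcl \<Rightarrow> rf \<Rightarrow> nat list \<Rightarrow> nat \<Rightarrow> bool" for Q :: orcl where
  ev_Zero: "ev Q Zero xs 0"
| ev_Succ: "ev Q Succ (x # xs) (Suc x)"
| ev_Proj: "i < length xs \<Longrightarrow> ev Q (Proj i) xs (xs ! i)"
| ev_Orc:  "Q x = Some y \<Longrightarrow> ev Q Orc (x # xs) y"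
| ev_Comp: "length ys = length gs \<Longrightarrow> (\<forall>i < length gs. ev Q (gs ! i) xs (ys ! i))
             \<Longrightarrow> ev Q f ys z \<Longrightarrow> ev Q (Comp f gs) xs z"
| ev_Prec0: "ev Q f xs y \<Longrightarrow> ev Q (Prec f g) (0 # xs) y"
| ev_PrecS: "ev Q (Prec f g) (n # xs) y \<Longrightarrow> ev Q g (n # y # xs) z
             \<Longrightarrow> ev Q (Prec f g) (Suc n # xs) z"
| ev_Mu: "ev Q f (n # xs) 0 \<Longrightarrow> (\<forall>m < n. \<exists>y. 0 < y \<and> ev Q f (m # xs) y)
             \<Longrightarrow> ev Q (Mu f) xs n"

definition Phi :: "nat \<Rightarrow> orcl \<Rightarrow> nat \<Rightarrow> nat option" where
  "Phi e Q n = (if \<exists>y. ev Q (from_nat e) [n] y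
                then Some (THE y. ev Q (from_nat e) [n] y) else None)"

definition set_orc :: "nat set \<Rightarrow> orcl" where
  "set_orc Z = (\<lambda>n. Some (if n \<in> Z then 1 else 0))"

definition Z_computable :: "nat set \<Rightarrow> (nat \<Rightarrow> nat option) \<Rightarrow> bool" where
  "Z_computable Z \<phi> \<longleftrightarrow> (\<exists>e. \<forall>n. \<phi> n = Phi e (set_orc Z) n)"

definition turing_le :: "nat set \<Rightarrow> nat set \<Rightarrow> bool" (infix "\<le>\<^sub>T" 50) where
  "X \<le>\<^sub>T Y \<longleftrightarrow> (\<exists>e. \<forall>n. Phi e (set_orc Y) n = Some (if n \<in> X then 1 else 0))"

definition ojoin :: "orcl \<Rightarrow> orcl \<Rightarrow> orcl" where
  "ojoin \<phi> \<psi> = (\<lambda>k. if even k then \<phi> (k div 2) else \<psi> (k div 2))"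

definition B_carrier :: "nat set \<Rightarrow> (nat \<Rightarrow> nat option) set" where
  "B_carrier Z = {\<phi>. Z_computable Z \<phi>}"

text \<open>Application: n maps to Phi_{phi(0)}^{phi join psi}(n); if phi(0) is undefined the
  result is the everywhere undefined function.  Application is thus always defined.\<close>
definition B_app :: "(nat \<Rightarrow> nat option) \<Rightarrow> (nat \<Rightarrow> nat option) \<Rightarrow> (nat \<Rightarrow> nat option) option" where
  "B_app \<phi> \<psi> = Some (\<lambda>n. case \<phi> 0 of None \<Rightarrow> None | Some e \<Rightarrow> Phi e (ojoin \<phi> \<psi>) n)"

definition pca_embedding ::
  "'a set \<Rightarrow> ('a \<Rightarrow> 'a \<Rightarrow> 'a option) \<Rightarrow> 'b set \<Rightarrow> ('b \<Rightarrow> 'b \<Rightarrow> 'b option) \<Rightarrow> ('a \<Rightarrow> 'b) \<Rightarrow> bool" where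
  "pca_embedding A appA B appB f \<longleftrightarrow>
     f ` A \<subseteq> B \<and> inj_on f A \<and>
     (\<forall>a\<in>A. \<forall>b\<in>A. \<forall>c. appA a b = Some c \<longrightarrow> appB (f a) (f b) = Some (f c))"

end

(* An embedding f of B^X into B^Y sends the numerals (constant functions) n to Y-computable
   functions f(n), and since it respects application of the successor element s,
   f(n + 1) = Phi_e(f(s) join f(n)) for a fixed index e: the sequence f(n) is uniformly
   Y-computable.  The elements computing chi_X and 1 - chi_X turn the numeral n into the
   numerals chi_X(n) and 1 - chi_X(n), and f(1), f(0) differ at some argument k.  To decide
   n in X relative to Y, evaluate f(chi_X) f(n) and f(1 - chi_X) f(n) at k in parallel: they
   are f(chi_X(n)) and f(1 - chi_X(n)), so one of them converges, and its value tells whether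
   it is f(1) or f(0).  Uniformity is obtained by approximating the partial functions f(n) in
   stages, at stage s by a finite table coded as a number, which makes the approximations
   primitive recursive in n and s.
   Conversely, if X is Y-computable then substituting a Y-program for the oracle makes every
   X-computable function Y-computable, and the identity is an embedding. *)

theory Submission
  imports Defs
begin

lemma ev_functional: "ev Q c xs y \<Longrightarrow> ev Q c xs y' \<Longrightarrow> y = y'"
proof (induction arbitrary: y' rule: ev.induct)
  case (ev_Comp ys gs xs f z)
  from ev_Comp.prems show ?case
  proof (cases rule: ev.cases)
    case (ev_Comp ys')
    have "ys' = ys"
      by (rule nth_equalityI) (use ev_Comp ev_Comp.hyps ev_Comp.IH in metis)+
    then show ?thesis using ev_Comp ev_Comp.IH by auto
  qed
next
  case (ev_PrecS f g n xs y z)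
  from ev_PrecS.prems show ?case by (cases rule: ev.cases) (use ev_PrecS.IH in fastforce)+
next
  case (ev_Mu f n xs)
  from ev_Mu.prems show ?case
  proof (cases rule: ev.cases)
    case ev_Mu
    show ?thesis
    proof (rule ccontr)
      assume "n \<noteq> y'"
      then consider "n < y'" | "y' < n" by linarith
      then show False
        by cases (use ev_Mu ev_Mu.hyps ev_Mu.IH in fastforce)+
    qed
  qed
qed (erule ev.cases; simp)+

lemma Phi_eqI: "ev Q (from_nat e) [n] y \<Longrightarrow> Phi e Q n = Some y"
  unfolding Phi_def using ev_functional by (auto intro!: the_equality)

lemma Phi_SomeD: "Phi e Q n = Some y \<Longrightarrow> ev Q (from_nat e) [n] y"
  unfolding Phi_def by (auto split: if_splits intro: theI ev_functional)

lemma ev_CompI: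
  "list_all2 (\<lambda>g y. ev Q g xs y) gs ys \<Longrightarrow> ev Q f ys z \<Longrightarrow> ev Q (Comp f gs) xs z"
  by (rule ev_Comp) (auto simp: list_all2_conv_all_nth)

lemma ev_args_Cons:
  "ev Q g xs y \<Longrightarrow> list_all2 (\<lambda>g y. ev Q g xs y) gs ys
    \<Longrightarrow> list_all2 (\<lambda>g y. ev Q g xs y) (g # gs) (y # ys)"
  by simp

lemma ev_args_map:
  "(\<And>x. x \<in> set xs \<Longrightarrow> ev Q (f x) args (g x)) \<Longrightarrow> list_all2 (\<lambda>g y. ev Q g args y) (map f xs) (map g xs)"
  by (induction xs) auto

lemma ev_Proj_nth: "i < length xs \<Longrightarrow> y = xs ! i \<Longrightarrow> ev Q (Proj i) xs y"
  by (simp add: ev_Proj)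

lemma ev_Proj_0: "ev Q (Proj 0) (x # xs) x"
  and ev_Proj_1: "ev Q (Proj 1) (x # y # xs) y"
  and ev_Proj_2: "ev Q (Proj 2) (x # y # z # xs) z"
  and ev_Proj_3: "ev Q (Proj 3) (x # y # z # w # xs) w"
  by (simp_all add: ev_Proj_nth)

lemma ev_Prec_rec_nat:
  assumes "ev Q f xs b" and "\<And>k r. ev Q g (k # r # xs) (G k r)"
  shows "ev Q (Prec f g) (n # xs) (rec_nat b G n)"
  by (induction n) (auto intro: ev_Prec0 ev_PrecS assms)

lemmas ev_rf_intros = ev_CompI list.rel_intros ev_Proj_0 ev_Proj_1 ev_Proj_2 ev_Proj_3 ev_Zero ev_Succ

primrec const_rf :: "nat \<Rightarrow> rf" where
  "const_rf 0 = Zero"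
| "const_rf (Suc c) = Comp Succ [const_rf c]"

lemma ev_const_rf: "ev Q (const_rf c) xs c"
  by (induction c) (auto intro!: ev_CompI ev_Zero intro: ev_Succ)

declare const_rf.simps [simp del]

definition pred_rf :: rf where
  "pred_rf = Prec Zero (Proj 0)"

lemma ev_pred_rf: "ev Q pred_rf [a] (a - 1)"
proof -
  have "ev Q pred_rf [a] (rec_nat 0 (\<lambda>k r. k) a)"
    unfolding pred_rf_def by (rule ev_Prec_rec_nat ev_rf_intros)+
  then show ?thesis by (cases a) auto
qed

definition add_rf :: rf where
  "add_rf = Prec (Proj 0) (Comp Succ [Proj 1])"

lemma ev_add_rf: "ev Q add_rf [a, b] (a + b)"
proof -
  have "ev Q add_rf [a, b] (rec_nat b (\<lambda>k r. Suc r) a)"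
    unfolding add_rf_def by (rule ev_Prec_rec_nat ev_rf_intros)+
  moreover have "rec_nat b (\<lambda>k r. Suc r) a = a + b" by (induction a) auto
  ultimately show ?thesis by simp
qed

definition mult_rf :: rf where
  "mult_rf = Prec Zero (Comp add_rf [Proj 1, Proj 2])"

lemma ev_mult_rf: "ev Q mult_rf [a, b] (a * b)"
proof -
  have "ev Q mult_rf [a, b] (rec_nat 0 (\<lambda>k r. r + b) a)"
    unfolding mult_rf_def by (rule ev_Prec_rec_nat ev_rf_intros ev_add_rf)+
  moreover have "rec_nat 0 (\<lambda>k r. r + b) a = a * b" by (induction a) auto
  ultimately show ?thesis by simp
qed

definition ifz_rf :: rf where
  "ifz_rf = Prec (Proj 0) (Proj 3)"

lemma ev_ifz_rf: "ev Q ifz_rf [c, a, b] (if c = 0 then a else b)"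
proof -
  have "ev Q ifz_rf [c, a, b] (rec_nat a (\<lambda>k r. b) c)"
    unfolding ifz_rf_def by (rule ev_Prec_rec_nat ev_rf_intros)+
  then show ?thesis by (cases c) auto
qed

definition sg_rf :: rf where
  "sg_rf = Prec Zero (const_rf 1)"

lemma ev_sg_rf: "ev Q sg_rf [a] (if a = 0 then 0 else 1)"
proof -
  have "ev Q sg_rf [a] (rec_nat 0 (\<lambda>k r. 1) a)"
    unfolding sg_rf_def by (rule ev_Prec_rec_nat ev_rf_intros ev_const_rf)+
  then show ?thesis by (cases a) auto
qed

definition monus_rf :: rf where
  "monus_rf = Comp (Prec (Proj 0) (Comp pred_rf [Proj 1])) [Proj 1, Proj 0]"

lemma ev_monus_rf: "ev Q monus_rf [a, b] (a - b)"
proof -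
  have "ev Q monus_rf [a, b] (rec_nat a (\<lambda>k r. r - 1) b)"
    unfolding monus_rf_def by (rule ev_Prec_rec_nat ev_rf_intros ev_pred_rf)+
  moreover have "rec_nat a (\<lambda>k r. r - 1) b = a - b" by (induction b) auto
  ultimately show ?thesis by simp
qed

definition eq_rf :: rf where
  "eq_rf = Comp ifz_rf
     [Comp add_rf [monus_rf, Comp monus_rf [Proj 1, Proj 0]], const_rf 1, Zero]"

lemma ev_eq_rf: "ev Q eq_rf [a, b] (if a = b then 1 else 0)"
proof -
  have "ev Q eq_rf [a, b] (if (a - b) + (b - a) = 0 then 1 else 0)"
    unfolding eq_rf_def by (rule ev_rf_intros ev_ifz_rf ev_monus_rf ev_add_rf ev_const_rf)+
  moreover have "(a - b) + (b - a) = 0 \<longleftrightarrow> a = b" by arith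
  ultimately show ?thesis by simp
qed

definition mod_rf :: rf where
  "mod_rf = Prec Zero
     (Comp ifz_rf [Comp monus_rf [Proj 2, Comp Succ [Proj 1]], Zero, Comp Succ [Proj 1]])"

lemma ev_mod_rf: "0 < d \<Longrightarrow> ev Q mod_rf [z, d] (z mod d)"
proof -
  assume d: "0 < d"
  have "ev Q mod_rf [z, d] (rec_nat 0 (\<lambda>k r. if d - Suc r = 0 then 0 else Suc r) z)"
    unfolding mod_rf_def by (rule ev_Prec_rec_nat ev_rf_intros ev_ifz_rf ev_monus_rf)+
  moreover have "rec_nat 0 (\<lambda>k r. if d - Suc r = 0 then 0 else Suc r) z = z mod d"
  proof (induction z)
    case (Suc z)
    have "z mod d < d" using d by simp
    then show ?case using Suc by (simp add: mod_Suc)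
  qed simp
  ultimately show ?thesis by simp
qed

definition div_rf :: rf where
  "div_rf = Prec Zero (Comp ifz_rf
     [Comp monus_rf [Proj 2, Comp Succ [Comp mod_rf [Proj 0, Proj 2]]], Comp Succ [Proj 1], Proj 1])"

lemma ev_div_rf: "0 < d \<Longrightarrow> ev Q div_rf [z, d] (z div d)"
proof -
  assume d: "0 < d"
  have "ev Q div_rf [z, d] (rec_nat 0 (\<lambda>k r. if d - Suc (k mod d) = 0 then Suc r else r) z)"
    unfolding div_rf_def by (rule ev_Prec_rec_nat ev_rf_intros ev_ifz_rf ev_monus_rf ev_mod_rf d)+
  moreover have "rec_nat 0 (\<lambda>k r. if d - Suc (k mod d) = 0 then Suc r else r) z = z div d"
  proof (induction z)
    case (Suc z)
    have "z mod d < d" using d by simp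
    then have "(d - Suc (z mod d) = 0) = (Suc z mod d = 0)" by (auto simp: mod_Suc)
    then show ?case using Suc by (simp add: div_Suc)
  qed simp
  ultimately show ?thesis by simp
qed

definition pow_rf :: rf where
  "pow_rf = Comp (Prec (const_rf 1) (Comp mult_rf [Proj 1, Proj 2])) [Proj 1, Proj 0]"

lemma ev_pow_rf: "ev Q pow_rf [b, q] (b ^ q)"
proof -
  have "ev Q pow_rf [b, q] (rec_nat 1 (\<lambda>k r. r * b) q)"
    unfolding pow_rf_def by (rule ev_Prec_rec_nat ev_rf_intros ev_mult_rf ev_const_rf)+
  moreover have "rec_nat 1 (\<lambda>k r. r * b) q = b ^ q" by (induction q) auto
  ultimately show ?thesis by simp
qed

section \<open>Step-bounded evaluation\<close>

text \<open>In \<open>beval c h s xs\<close> the oracle is replaced by a total \<open>h\<close>, where \<open>h x = 0\<close> means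
  "not known" and \<open>h x = Suc v\<close> means "answer \<open>v\<close>"; results use the same encoding.  Every
  unbounded search only inspects the arguments \<open>\<le> s\<close>; its state \<open>mu_search F t\<close> is \<open>0\<close> while
  searching, \<open>1\<close> after an unknown value, and \<open>t + 2\<close> once \<open>t\<close> has been found.\<close>

definition mu_step :: "(nat \<Rightarrow> nat) \<Rightarrow> nat \<Rightarrow> nat \<Rightarrow> nat" where
  "mu_step F t z = (if z = 0 then (if F t = 0 then 1 else if F t - 1 = 0 then t + 2 else 0) else z)"

definition mu_search :: "(nat \<Rightarrow> nat) \<Rightarrow> nat \<Rightarrow> nat" where
  "mu_search F n = rec_nat 0 (mu_step F) n"

definition mu_result :: "nat \<Rightarrow> nat" where
  "mu_result z = (if z - 1 = 0 then 0 else z - 1)"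

primrec beval :: "rf \<Rightarrow> (nat \<Rightarrow> nat) \<Rightarrow> nat \<Rightarrow> nat list \<Rightarrow> nat" where
  "beval Zero h s xs = 1"
| "beval Succ h s xs = (case xs of [] \<Rightarrow> 0 | x # _ \<Rightarrow> Suc (Suc x))"
| "beval (Proj i) h s xs = (if i < length xs then Suc (xs ! i) else 0)"
| "beval (Comp f gs) h s xs = (let rs = map (\<lambda>g. beval g h s xs) gs in
      if 0 \<in> set rs then 0 else beval f h s (map (\<lambda>r. r - 1) rs))"
| "beval (Prec f g) h s xs = (case xs of [] \<Rightarrow> 0 | n # ys \<Rightarrow>
      rec_nat (beval f h s ys) (\<lambda>k r. if r = 0 then 0 else beval g h s (k # (r - 1) # ys)) n)"
| "beval (Mu f) h s xs = mu_result (mu_search (\<lambda>t. beval f h s (t # xs)) (Suc s))"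
| "beval Orc h s xs = (case xs of [] \<Rightarrow> 0 | x # _ \<Rightarrow> h x)"

lemma mu_search_0: "mu_search F 0 = 0"
  and mu_search_Suc: "mu_search F (Suc t) = mu_step F t (mu_search F t)"
  by (simp_all add: mu_search_def)

lemma mu_search_found:
  assumes "mu_search F t = Suc (Suc y)"
  shows "F y = 1" and "\<forall>m<y. 2 \<le> F m"
proof -
  have "(mu_search F t = 0 \<longrightarrow> (\<forall>m<t. 2 \<le> F m)) \<and>
    (\<forall>y. mu_search F t = Suc (Suc y) \<longrightarrow> F y = 1 \<and> (\<forall>m<y. 2 \<le> F m))"
  proof (induction t)
    case (Suc t)
    then show ?case
      by (cases "mu_search F t = 0") (auto simp: mu_search_Suc mu_step_def less_Suc_eq split: if_splits)
  qed (simp add: mu_search_0)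
  with assms show "F y = 1" and "\<forall>m<y. 2 \<le> F m" by auto
qed

lemma mu_search_eq:
  assumes "\<forall>m<n. 2 \<le> F m" and "F n = 1"
  shows "mu_search F t = (if t \<le> n then 0 else n + 2)"
proof (induction t)
  case (Suc t)
  then show ?case using assms by (cases "t < n") (auto simp: mu_search_Suc mu_step_def)
qed (simp add: mu_search_0)

definition oracle_approx :: "orcl \<Rightarrow> (nat \<Rightarrow> nat) \<Rightarrow> bool" where
  "oracle_approx Q h \<longleftrightarrow> (\<forall>x v. h x = Suc v \<longrightarrow> Q x = Some v)"

lemma beval_sound: "oracle_approx Q h \<Longrightarrow> beval c h s xs = Suc y \<Longrightarrow> ev Q c xs y"
proof (induction c arbitrary: xs y)
  case Zero then show ?case by (auto intro: ev_Zero)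
next
  case Succ then show ?case by (auto split: list.splits intro: ev_Succ)
next
  case (Proj i) then show ?case by (auto split: if_splits intro: ev_Proj)
next
  case Orc then show ?case by (auto simp: oracle_approx_def split: list.splits intro: ev_Orc)
next
  case (Comp f gs)
  let ?rs = "map (\<lambda>g. beval g h s xs) gs"
  have nz: "0 \<notin> set ?rs" and f: "beval f h s (map (\<lambda>r. r - 1) ?rs) = Suc y"
    using Comp.prems by (auto simp: Let_def split: if_splits)
  have "ev Q g xs (beval g h s xs - 1)" if g: "g \<in> set gs" for g
  proof -
    have "beval g h s xs \<noteq> 0" using nz g by auto
    then have "beval g h s xs = Suc (beval g h s xs - 1)" by simp
    then show ?thesis using Comp.IH(2)[OF g Comp.prems(1)] by blast
  qed
  then have "list_all2 (\<lambda>g y. ev Q g xs y) gs (map (\<lambda>r. r - 1) ?rs)"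
    by (auto simp: list_all2_conv_all_nth)
  then show ?case by (rule ev_CompI) (use Comp.IH(1) Comp.prems(1) f in blast)
next
  case (Prec f g)
  then obtain n ys where xs: "xs = n # ys" by (auto split: list.splits)
  have "rec_nat (beval f h s ys) (\<lambda>k r. if r = 0 then 0 else beval g h s (k # (r - 1) # ys)) n = Suc y
        \<Longrightarrow> ev Q (Prec f g) (n # ys) y" for y
  proof (induction n arbitrary: y)
    case 0 then show ?case using Prec.IH(1) Prec.prems(1) by (auto intro: ev_Prec0)
  next
    case (Suc n)
    then obtain y' where y': "rec_nat (beval f h s ys)
        (\<lambda>k r. if r = 0 then 0 else beval g h s (k # (r - 1) # ys)) n = Suc y'"
      by (auto split: if_splits simp: gr0_conv_Suc)
    with Suc.prems have "beval g h s (n # y' # ys) = Suc y" by simp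
    then have "ev Q g (n # y' # ys) y" using Prec.IH(2) Prec.prems(1) by blast
    moreover have "ev Q (Prec f g) (n # ys) y'" using Suc.IH y' by blast
    ultimately show ?case by (rule ev_PrecS[rotated])
  qed
  then show ?case using Prec.prems(2) xs by simp
next
  case (Mu f)
  let ?F = "\<lambda>t. beval f h s (t # xs)"
  have "mu_search ?F (Suc s) = Suc (Suc y)"
    using Mu.prems(2) by (auto simp: mu_result_def split: if_splits)
  note found = mu_search_found[OF this]
  show ?case
  proof (rule ev_Mu)
    show "ev Q f (y # xs) 0" using Mu.IH Mu.prems(1) found(1) by (simp add: One_nat_def)
    show "\<forall>m<y. \<exists>v>0. ev Q f (m # xs) v"
    proof (intro allI impI)
      fix m assume "m < y"
      then obtain v where "?F m = Suc v" "v > 0" using found(2) by (cases "?F m") auto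
      then show "\<exists>v>0. ev Q f (m # xs) v" using Mu.IH Mu.prems(1) by blast
    qed
  qed
qed

text \<open>Conversely a terminating computation is found by every sufficiently good approximation:
  one with a large enough search bound that is exact on a finite set of oracle queries.\<close>

definition stably :: "orcl \<Rightarrow> (nat \<times> (nat \<Rightarrow> nat)) filter" where
  "stably Q = Abs_filter (\<lambda>P. \<exists>s0 D. finite D \<and> D \<subseteq> dom Q \<and>
     (\<forall>s\<ge>s0. \<forall>h. (\<forall>x\<in>D. h x = Suc (the (Q x))) \<longrightarrow> P (s, h)))"

lemma eventually_stably:
  "eventually P (stably Q) \<longleftrightarrow> (\<exists>s0 D. finite D \<and> D \<subseteq> dom Q \<and>
     (\<forall>s\<ge>s0. \<forall>h. (\<forall>x\<in>D. h x = Suc (the (Q x))) \<longrightarrow> P (s, h)))"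
proof -
  let ?E = "\<lambda>P. \<exists>(s0::nat) D. finite D \<and> D \<subseteq> dom Q \<and>
     (\<forall>s\<ge>s0. \<forall>h. (\<forall>x\<in>D. h x = Suc (the (Q x))) \<longrightarrow> P (s, h))"
  have "is_filter ?E"
  proof
    show "?E (\<lambda>_. True)" by (intro exI[of _ 0] exI[of _ "{}"]) simp
  next
    fix P R :: "nat \<times> (nat \<Rightarrow> nat) \<Rightarrow> bool"
    assume "?E P" and "?E R"
    then obtain s0 D s1 E where "finite D" "D \<subseteq> dom Q" "finite E" "E \<subseteq> dom Q"
      "\<forall>s\<ge>s0. \<forall>h. (\<forall>x\<in>D. h x = Suc (the (Q x))) \<longrightarrow> P (s, h)"
      "\<forall>s\<ge>s1. \<forall>h. (\<forall>x\<in>E. h x = Suc (the (Q x))) \<longrightarrow> R (s, h)" by blast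
    then show "?E (\<lambda>x. P x \<and> R x)" by (intro exI[of _ "max s0 s1"] exI[of _ "D \<union> E"]) auto
  next
    fix P R :: "nat \<times> (nat \<Rightarrow> nat) \<Rightarrow> bool"
    assume "\<forall>x. P x \<longrightarrow> R x" and "?E P"
    then show "?E R" by meson
  qed
  then show ?thesis unfolding stably_def by (rule eventually_Abs_filter)
qed

lemma eventually_stably_bound: "eventually (\<lambda>(s, h). n \<le> s) (stably Q)"
  unfolding eventually_stably by (intro exI[of _ n] exI[of _ "{}"]) simp

lemma eventually_stably_query:
  "Q x = Some y \<Longrightarrow> eventually (\<lambda>(s, h). h x = Suc y) (stably Q)"
  unfolding eventually_stably by (intro exI[of _ "0::nat"] exI[of _ "{x}"]) auto

lemma ev_imp_eventually_beval:
  "ev Q c xs y \<Longrightarrow> eventually (\<lambda>(s, h). beval c h s xs = Suc y) (stably Q)"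
proof (induction rule: ev.induct)
  case (ev_Orc x y xs)
  then show ?case by (auto elim: eventually_mono[OF eventually_stably_query])
next
  case (ev_Comp ys gs xs f z)
  have "eventually (\<lambda>x. \<forall>i\<in>{..<length gs}. (\<lambda>(s, h). beval (gs ! i) h s xs = Suc (ys ! i)) x)
      (stably Q)"
    using ev_Comp.IH(1) by (intro eventually_ball_finite) auto
  with ev_Comp.IH(2) show ?case
  proof eventually_elim
    case (elim x)
    obtain s h where x: "x = (s, h)" by fastforce
    have rs: "map (\<lambda>g. beval g h s xs) gs = map Suc ys"
      by (rule nth_equalityI) (use elim x ev_Comp.hyps(1) in auto)
    show ?case unfolding x case_prod_conv beval.simps Let_def rs using elim x by (simp add: comp_def)
  qed
next
  case (ev_PrecS f g n xs y z)
  from ev_PrecS.IH show ?case by eventually_elim auto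
next
  case (ev_Mu f n xs)
  obtain v where v: "\<forall>m<n. 0 < v m \<and> ev Q f (m # xs) (v m)"
    "\<forall>m<n. eventually (\<lambda>(s, h). beval f h s (m # xs) = Suc (v m)) (stably Q)"
    using ev_Mu.IH(2) by metis
  then have "eventually (\<lambda>x. \<forall>m\<in>{..<n}. (\<lambda>(s, h). beval f h s (m # xs) = Suc (v m)) x) (stably Q)"
    by (intro eventually_ball_finite) auto
  with ev_Mu.IH(1) eventually_stably_bound[of n Q] show ?case
  proof eventually_elim
    case (elim x)
    obtain s h where x: "x = (s, h)" by fastforce
    let ?F = "\<lambda>t. beval f h s (t # xs)"
    have "mu_search ?F (Suc s) = n + 2"
      using elim v(1) by (subst mu_search_eq[of n]) (auto simp: x)
    then show ?case by (simp add: x mu_result_def)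
  qed
qed (simp_all split: list.split)

section \<open>Compiling step-bounded evaluation\<close>

definition proj_block :: "nat \<Rightarrow> nat \<Rightarrow> rf list" where
  "proj_block m L = map (\<lambda>j. Proj (m + j)) [0..<L]"

lemma ev_proj_block:
  "length xs = m \<Longrightarrow> length ys = L \<Longrightarrow> list_all2 (\<lambda>g y. ev Q g (xs @ ys) y) (proj_block m L) ys"
  by (auto simp: proj_block_def list_all2_conv_all_nth nth_append intro!: ev_Proj_nth)

lemma ev_proj_block_0: "length ys = L \<Longrightarrow> list_all2 (\<lambda>g y. ev Q g ys y) (proj_block 0 L) ys"
  using ev_proj_block[of "[]"] by simp

lemma ev_proj_block_2:
  "length ys = L \<Longrightarrow> list_all2 (\<lambda>g y. ev Q g (x # z # ys) y) (proj_block 2 L) ys"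
  using ev_proj_block[of "[x, z]"] by simp

primrec all_nonzero_rf :: "rf list \<Rightarrow> rf" where
  "all_nonzero_rf [] = const_rf 1"
| "all_nonzero_rf (c # cs) = Comp mult_rf [Comp sg_rf [c], all_nonzero_rf cs]"

lemma ev_all_nonzero_rf:
  "list_all2 (\<lambda>g y. ev Q g args y) cs rs \<Longrightarrow> ev Q (all_nonzero_rf cs) args (if 0 \<in> set rs then 0 else 1)"
proof (induction cs arbitrary: rs)
  case Nil then show ?case by (simp add: ev_const_rf)
next
  case (Cons c cs)
  then obtain r rs' where rs: "rs = r # rs'" "ev Q c args r" "list_all2 (\<lambda>g y. ev Q g args y) cs rs'"
    by (cases rs) auto
  have "ev Q (all_nonzero_rf (c # cs)) args ((if r = 0 then 0 else 1) * (if 0 \<in> set rs' then 0 else 1))"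
    unfolding all_nonzero_rf.simps by (rule ev_rf_intros ev_mult_rf ev_sg_rf rs Cons.IH)+
  also have "(if r = 0 then 0 else 1) * (if 0 \<in> set rs' then 0 else 1) = (if 0 \<in> set rs then 0 else 1::nat)"
    using rs by simp
  finally show ?case .
qed

definition comp_rf :: "rf \<Rightarrow> rf list \<Rightarrow> nat \<Rightarrow> nat \<Rightarrow> rf" where
  "comp_rf cf cgs m P = Comp mult_rf
     [Comp cf (map (\<lambda>g. Comp pred_rf [g]) cgs @ proj_block m P), all_nonzero_rf cgs]"

lemma ev_comp_rf:
  assumes "length xs = m" "length ps = P"
    and gs: "list_all2 (\<lambda>g y. ev Q g (xs @ ps) y) cgs rs"
    and f: "ev Q cf (map (\<lambda>r. r - 1) rs @ ps) z"
  shows "ev Q (comp_rf cf cgs m P) (xs @ ps) (if 0 \<in> set rs then 0 else z)"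
proof -
  have "list_all2 (\<lambda>g y. ev Q g (xs @ ps) y) (map (\<lambda>g. Comp pred_rf [g]) cgs) (map (\<lambda>r. r - 1) rs)"
    using gs by (induction rule: list_all2_induct) (auto intro: ev_CompI ev_pred_rf[unfolded One_nat_def])
  then have cf: "ev Q (Comp cf (map (\<lambda>g. Comp pred_rf [g]) cgs @ proj_block m P)) (xs @ ps) z"
    by (intro ev_CompI[OF list_all2_appendI f] ev_proj_block assms)
  have "ev Q (comp_rf cf cgs m P) (xs @ ps) (z * (if 0 \<in> set rs then 0 else 1))"
    unfolding comp_rf_def by (rule ev_rf_intros ev_mult_rf ev_all_nonzero_rf gs cf)+
  also have "z * (if 0 \<in> set rs then 0 else 1) = (if 0 \<in> set rs then 0 else z)" by simp
  finally show ?thesis .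
qed

definition prec_rf :: "rf \<Rightarrow> rf \<Rightarrow> nat \<Rightarrow> rf" where
  "prec_rf cf cg L = Prec cf
     (Comp mult_rf [Comp sg_rf [Proj 1], Comp cg (Proj 0 # Comp pred_rf [Proj 1] # proj_block 2 L)])"

lemma ev_prec_rf:
  assumes "length ys = L" and f: "ev Q cf ys b" and g: "\<And>k r. ev Q cg (k # r # ys) (G k r)"
  shows "ev Q (prec_rf cf cg L) (n # ys) (rec_nat b (\<lambda>k r. if r = 0 then 0 else G k (r - 1)) n)"
proof -
  have "ev Q (Comp mult_rf [Comp sg_rf [Proj 1], Comp cg (Proj 0 # Comp pred_rf [Proj 1] # proj_block 2 L)])
      (k # r # ys) ((if r = 0 then 0 else 1) * G k (r - 1))" for k r
    by (rule ev_rf_intros ev_mult_rf ev_sg_rf ev_pred_rf g ev_proj_block_2 assms(1))+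
  then have "ev Q (prec_rf cf cg L) (n # ys) (rec_nat b (\<lambda>k r. (if r = 0 then 0 else 1) * G k (r - 1)) n)"
    unfolding prec_rf_def by (rule ev_Prec_rec_nat[OF f])
  moreover have "(\<lambda>k r. (if r = 0 then 0 else 1) * G k (r - 1)) = (\<lambda>k r. if r = 0 then 0 else G k (r - 1))"
    by (intro ext) simp
  ultimately show ?thesis by simp
qed

definition mu_result_rf :: rf where
  "mu_result_rf = Comp ifz_rf [pred_rf, Zero, pred_rf]"

lemma ev_mu_result_rf: "ev Q mu_result_rf [z] (mu_result z)"
  unfolding mu_result_rf_def mu_result_def by (rule ev_rf_intros ev_ifz_rf ev_pred_rf)+

definition mu_step_rf :: "rf \<Rightarrow> nat \<Rightarrow> rf" where
  "mu_step_rf cf L = (let R = Comp cf (Proj 0 # proj_block 2 L) in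
     Comp ifz_rf [Proj 1, Comp ifz_rf [R, const_rf 1,
       Comp ifz_rf [Comp pred_rf [R], Comp Succ [Comp Succ [Proj 0]], Zero]], Proj 1])"

lemma ev_mu_step_rf:
  assumes "length args = L" "\<And>t. ev Q cf (t # args) (F t)"
  shows "ev Q (mu_step_rf cf L) (t # z # args) (mu_step F t z)"
proof -
  have cf: "ev Q (Comp cf (Proj 0 # proj_block 2 L)) (t # z # args) (F t)"
    by (rule ev_CompI[OF ev_args_Cons[OF ev_Proj_0 ev_proj_block_2[OF assms(1)]] assms(2)])
  have "ev Q (mu_step_rf cf L) (t # z # args)
      (if z = 0 then (if F t = 0 then 1 else if F t - 1 = 0 then Suc (Suc t) else 0) else z)"
    unfolding mu_step_rf_def Let_def by (rule ev_rf_intros ev_ifz_rf ev_pred_rf ev_const_rf cf)+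
  also have "\<dots> = mu_step F t z" by (simp add: mu_step_def)
  finally show ?thesis .
qed

definition mu_search_rf :: "rf \<Rightarrow> nat \<Rightarrow> nat \<Rightarrow> rf" where
  "mu_search_rf cf m L =
     Comp mu_result_rf [Comp (Prec Zero (mu_step_rf cf L)) (Comp Succ [Proj m] # proj_block 0 L)]"

lemma ev_mu_search_rf:
  assumes "length args = L" "m < L" "\<And>t. ev Q cf (t # args) (F t)"
  shows "ev Q (mu_search_rf cf m L) args (mu_result (mu_search F (Suc (args ! m))))"
proof -
  have args: "list_all2 (\<lambda>g y. ev Q g args y) (Comp Succ [Proj m] # proj_block 0 L) (Suc (args ! m) # args)"
    using assms by (intro ev_args_Cons ev_proj_block_0 ev_CompI[OF _ ev_Succ] list.rel_intros ev_Proj) auto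
  have search: "ev Q (Prec Zero (mu_step_rf cf L)) (Suc (args ! m) # args) (mu_search F (Suc (args ! m)))"
    unfolding mu_search_def by (rule ev_Prec_rec_nat ev_Zero ev_mu_step_rf assms)+
  show ?thesis unfolding mu_search_rf_def
    by (rule ev_CompI[OF ev_args_Cons[OF ev_CompI[OF args search] list.rel_intros(1)] ev_mu_result_rf])
qed

text \<open>The compiled program receives the \<open>m\<close> arguments followed by \<open>P\<close> parameters \<open>ps\<close>, the
  first of which is the search bound; the oracle approximation at \<open>x\<close> is computed by \<open>oc\<close>
  from \<open>x # ps\<close>.\<close>

primrec compile_beval :: "rf \<Rightarrow> rf \<Rightarrow> nat \<Rightarrow> nat \<Rightarrow> rf" where
  "compile_beval Zero oc P m = const_rf 1"
| "compile_beval Succ oc P m = (if m = 0 then Zero else Comp Succ [Comp Succ [Proj 0]])"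
| "compile_beval (Proj i) oc P m = (if i < m then Comp Succ [Proj i] else Zero)"
| "compile_beval Orc oc P m = (if m = 0 then Zero else Comp oc (Proj 0 # proj_block m P))"
| "compile_beval (Comp f gs) oc P m =
     comp_rf (compile_beval f oc P (length gs)) (map (\<lambda>g. compile_beval g oc P m) gs) m P"
| "compile_beval (Prec f g) oc P m = (case m of 0 \<Rightarrow> Zero | Suc m' \<Rightarrow>
     prec_rf (compile_beval f oc P m') (compile_beval g oc P (Suc (Suc m'))) (m' + P))"
| "compile_beval (Mu f) oc P m = mu_search_rf (compile_beval f oc P (Suc m)) m (m + P)"

lemma ev_compile_beval:
  assumes ps: "length ps = P" "0 < P" and oc: "\<And>x. ev Q oc (x # ps) (h x)"
  shows "length xs = m \<Longrightarrow> ev Q (compile_beval c oc P m) (xs @ ps) (beval c h (ps ! 0) xs)"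
proof (induction c arbitrary: m xs)
  case Zero then show ?case by (simp add: ev_const_rf)
next
  case Succ then show ?case
    by (cases xs) (simp_all add: ev_Zero, (rule ev_rf_intros)+)
next
  case (Proj i) then show ?case
    by (cases "i < m") (auto simp: nth_append intro!: ev_Zero ev_CompI[OF _ ev_Succ] ev_Proj_nth)
next
  case Orc
  show ?case
  proof (cases xs)
    case (Cons x xs')
    have "ev Q (Comp oc (Proj 0 # proj_block m P)) ((x # xs') @ ps) (h x)"
      by (rule ev_CompI[OF ev_args_Cons[OF _ ev_proj_block]]) (use Cons Orc ps oc in \<open>auto intro: ev_Proj_0\<close>)
    then show ?thesis using Cons Orc by simp
  qed (use Orc in \<open>simp add: ev_Zero\<close>)
next
  case (Comp f gs)
  have "list_all2 (\<lambda>g y. ev Q g (xs @ ps) y) (map (\<lambda>g. compile_beval g oc P m) gs)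
      (map (\<lambda>g. beval g h (ps ! 0) xs) gs)"
    by (rule ev_args_map) (use Comp in auto)
  from ev_comp_rf[OF Comp.prems ps(1) this Comp.IH(1)] show ?case by (simp add: Let_def)
next
  case (Prec f g)
  show ?case
  proof (cases xs)
    case (Cons n ys)
    with Prec.prems obtain m' where m: "m = Suc m'" "length ys = m'" by auto
    have "ev Q (compile_beval (Prec f g) oc P m) (n # ys @ ps)
      (rec_nat (beval f h (ps ! 0) ys) (\<lambda>k r. if r = 0 then 0 else beval g h (ps ! 0) (k # (r - 1) # ys)) n)"
      unfolding m compile_beval.simps nat.case
      by (rule ev_prec_rf) (use m ps Prec.IH[of "_ # _ # ys"] Prec.IH(1)[of ys] in auto)
    then show ?thesis using Cons by simp
  qed (use Prec.prems in \<open>simp add: ev_Zero\<close>)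
next
  case (Mu f)
  have "ev Q (compile_beval f oc P (Suc m)) (t # xs @ ps) (beval f h (ps ! 0) (t # xs))" for t
    using Mu.IH[of "t # xs"] Mu.prems by simp
  moreover have "(xs @ ps) ! m = ps ! 0" using Mu.prems by (simp add: nth_append)
  ultimately show ?case using ev_mu_search_rf[of "xs @ ps" "m + P" m] Mu.prems ps by simp
qed

section \<open>Approximation in stages\<close>

definition approximates :: "(nat \<Rightarrow> nat) \<Rightarrow> nat option \<Rightarrow> bool" where
  "approximates G r \<longleftrightarrow> (\<forall>s v. G s = Suc v \<longrightarrow> r = Some v) \<and>
     (\<forall>v. r = Some v \<longrightarrow> eventually (\<lambda>s. G s = Suc v) sequentially)"

lemma eventually_stably_sequentially:
  assumes P: "eventually P (stably Q)"
    and H: "\<And>x y. Q x = Some y \<Longrightarrow> eventually (\<lambda>s. H s x = Suc y) sequentially"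
  shows "eventually (\<lambda>s. P (s, H s)) sequentially"
proof -
  obtain s0 D where D: "finite D" "D \<subseteq> dom Q"
    and s0: "\<forall>s\<ge>s0. \<forall>h. (\<forall>x\<in>D. h x = Suc (the (Q x))) \<longrightarrow> P (s, h)"
    using P unfolding eventually_stably by blast
  have "\<forall>x\<in>D. eventually (\<lambda>s. H s x = Suc (the (Q x))) sequentially"
    using D(2) H by force
  then have "eventually (\<lambda>s. \<forall>x\<in>D. H s x = Suc (the (Q x))) sequentially"
    by (rule eventually_ball_finite[OF D(1)])
  with eventually_ge_at_top[of s0] show ?thesis
    by eventually_elim (use s0 in blast)
qed

lemma approximates_Phi:
  assumes "\<And>x. approximates (\<lambda>s. H s x) (Q x)"
  shows "approximates (\<lambda>s. beval (from_nat e) (H s) s [n]) (Phi e Q n)"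
  unfolding approximates_def
proof (intro conjI allI impI)
  fix s v assume "beval (from_nat e) (H s) s [n] = Suc v"
  moreover have "oracle_approx Q (H s)" using assms by (auto simp: oracle_approx_def approximates_def)
  ultimately show "Phi e Q n = Some v" by (intro Phi_eqI beval_sound)
next
  fix v assume "Phi e Q n = Some v"
  then have "eventually (\<lambda>(s, h). beval (from_nat e) h s [n] = Suc v) (stably Q)"
    by (intro ev_imp_eventually_beval Phi_SomeD)
  from eventually_stably_sequentially[OF this] assms
  show "eventually (\<lambda>s. beval (from_nat e) (H s) s [n] = Suc v) sequentially"
    by (simp add: approximates_def)
qed

definition join_approx :: "(nat \<Rightarrow> nat) \<Rightarrow> (nat \<Rightarrow> nat) \<Rightarrow> nat \<Rightarrow> nat" where
  "join_approx g h q = (if q mod 2 = 0 then g (q div 2) else h (q div 2))"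

lemma approximates_join_approx:
  assumes "\<And>x. approximates (\<lambda>s. G s x) (g x)" and "\<And>x. approximates (\<lambda>s. H s x) (h x)"
  shows "approximates (\<lambda>s. join_approx (G s) (H s) q) (ojoin g h q)"
  using assms by (simp add: join_approx_def ojoin_def even_iff_mod_2_eq_zero)

definition set_approx :: "nat set \<Rightarrow> nat \<Rightarrow> nat" where
  "set_approx Y x = Suc (if x \<in> Y then 1 else 0)"

definition stage_eval :: "nat set \<Rightarrow> rf \<Rightarrow> nat \<Rightarrow> nat \<Rightarrow> nat" where
  "stage_eval Y c s q = beval c (set_approx Y) s [q]"

lemma approximates_stage_eval:
  "approximates (\<lambda>s. stage_eval Y (from_nat e) s q) (Phi e (set_orc Y) q)"
  unfolding stage_eval_def
  by (rule approximates_Phi) (simp add: approximates_def set_approx_def set_orc_def)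

lemma base_expansion_digit:
  fixes B :: nat
  assumes B: "1 < B" and D: "\<forall>t<L. D t < B"
  shows "(\<Sum>t<L. D t * B ^ t) < B ^ L" and "q < L \<Longrightarrow> (\<Sum>t<L. D t * B ^ t) div B ^ q mod B = D q"
proof -
  have "(\<Sum>t<L. D t * B ^ t) < B ^ L \<and> (\<forall>q<L. (\<Sum>t<L. D t * B ^ t) div B ^ q mod B = D q)"
    using D
  proof (induction L)
    case (Suc L)
    let ?S = "\<Sum>t<L. D t * B ^ t"
    have IH: "?S < B ^ L" "\<forall>q<L. ?S div B ^ q mod B = D q" using Suc by auto
    have DL: "D L < B" using Suc.prems by simp
    have "?S + D L * B ^ L < B ^ Suc L"
    proof -
      have "D L * B ^ L \<le> (B - 1) * B ^ L" using DL by (intro mult_le_mono1) simp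
      with IH(1) have "?S + D L * B ^ L < B ^ L + (B - 1) * B ^ L" by linarith
      also have "\<dots> = B ^ Suc L" using B by (simp add: algebra_simps)
      finally show ?thesis .
    qed
    moreover have "(?S + D L * B ^ L) div B ^ q mod B = D q" if "q < Suc L" for q
    proof (cases "q < L")
      case True
      then obtain d where d: "L = Suc (q + d)" using less_imp_Suc_add by blast
      have split: "?S + D L * B ^ L = ?S + (D L * B ^ d * B) * B ^ q"
        using d by (simp add: power_add mult_ac)
      have "(?S + D L * B ^ L) div B ^ q = ?S div B ^ q + (D L * B ^ d) * B"
        unfolding split using B by simp
      then show ?thesis using IH(2) True by simp
    next
      case False
      with that have "q = L" by simp
      moreover have "(?S + D L * B ^ L) div B ^ L = D L + ?S div B ^ L" using B by simp
      ultimately show ?thesis using IH(1) DL by simp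
    qed
    ultimately show ?case by simp
  qed simp
  then show "(\<Sum>t<L. D t * B ^ t) < B ^ L" and "q < L \<Longrightarrow> (\<Sum>t<L. D t * B ^ t) div B ^ q mod B = D q"
    by auto
qed

text \<open>At stage \<open>s\<close> only finitely much of an approximation is kept, namely the arguments
  below \<open>s\<close> and the results \<open>\<le> s\<close>; this table is coded by a single number in base \<open>s + 2\<close>.\<close>

definition stage_cap :: "nat \<Rightarrow> nat \<Rightarrow> nat" where
  "stage_cap s r = (if r \<le> Suc s then r else 0)"

definition table_code :: "nat \<Rightarrow> (nat \<Rightarrow> nat) \<Rightarrow> nat" where
  "table_code s D = (\<Sum>t<s. stage_cap s (D t) * Suc (Suc s) ^ t)"

definition table_lookup :: "nat \<Rightarrow> nat \<Rightarrow> nat \<Rightarrow> nat" where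
  "table_lookup T q s = (if q < s then T div Suc (Suc s) ^ q mod Suc (Suc s) else 0)"

lemma table_lookup_code: "table_lookup (table_code s D) q s = (if q < s then stage_cap s (D q) else 0)"
proof -
  have "\<forall>t<s. stage_cap s (D t) < Suc (Suc s)" by (auto simp: stage_cap_def)
  from base_expansion_digit(2)[OF _ this] show ?thesis
    by (simp add: table_lookup_def table_code_def)
qed

lemma approximates_table_lookup:
  assumes "approximates (\<lambda>s. G s q) r"
  shows "approximates (\<lambda>s. table_lookup (table_code s (G s)) q s) r"
  unfolding approximates_def
proof (intro conjI allI impI)
  fix s v assume "table_lookup (table_code s (G s)) q s = Suc v"
  then have "G s q = Suc v" by (auto simp: table_lookup_code stage_cap_def split: if_splits)
  then show "r = Some v" using assms by (simp add: approximates_def)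
next
  fix v assume "r = Some v"
  then have "eventually (\<lambda>s. G s q = Suc v) sequentially" using assms by (simp add: approximates_def)
  moreover have "eventually (\<lambda>s. q < s \<and> v \<le> s) sequentially"
    by (simp add: eventually_conj_iff eventually_gt_at_top eventually_ge_at_top)
  ultimately show "eventually (\<lambda>s. table_lookup (table_code s (G s)) q s = Suc v) sequentially"
    by eventually_elim (simp add: table_lookup_code stage_cap_def)
qed

text \<open>Stage \<open>s\<close> approximations of a sequence given by \<open>h 0\<close> and \<open>h (n + 1) = \<Phi>\<^sub>e(g \<oplus> h n)\<close>,
  computed by primitive recursion on \<open>n\<close> through the tables.\<close>

definition iterate_table :: "nat set \<Rightarrow> rf \<Rightarrow> rf \<Rightarrow> rf \<Rightarrow> nat \<Rightarrow> nat \<Rightarrow> nat" where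
  "iterate_table Y c0 c cg s n = rec_nat (table_code s (stage_eval Y c0 s))
     (\<lambda>k T. table_code s (\<lambda>x. beval c (join_approx (stage_eval Y cg s) (\<lambda>q. table_lookup T q s)) s [x])) n"

lemma iterate_table_0: "iterate_table Y c0 c cg s 0 = table_code s (stage_eval Y c0 s)"
  and iterate_table_Suc: "iterate_table Y c0 c cg s (Suc n) = table_code s
    (\<lambda>x. beval c (join_approx (stage_eval Y cg s) (\<lambda>q. table_lookup (iterate_table Y c0 c cg s n) q s)) s [x])"
  by (simp_all add: iterate_table_def)

lemma approximates_iterate_table:
  assumes h0: "\<forall>q. h 0 q = Phi e0 (set_orc Y) q" and g: "\<forall>q. g q = Phi eg (set_orc Y) q"
    and step: "\<forall>n q. h (Suc n) q = Phi e (ojoin g (h n)) q"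
  shows "approximates (\<lambda>s. table_lookup (iterate_table Y (from_nat e0) (from_nat e) (from_nat eg) s n) q s) (h n q)"
proof (induction n arbitrary: q)
  case 0
  show ?case
    unfolding iterate_table_0 h0[rule_format] by (rule approximates_table_lookup approximates_stage_eval)+
next
  case (Suc n)
  let ?T = "\<lambda>s. iterate_table Y (from_nat e0) (from_nat e) (from_nat eg) s n"
  have "approximates (\<lambda>s. join_approx (stage_eval Y (from_nat eg) s) (\<lambda>q. table_lookup (?T s) q s) x)
      (ojoin g (h n) x)" for x
    using approximates_stage_eval g Suc.IH by (intro approximates_join_approx) simp_all
  then show ?case
    unfolding iterate_table_Suc step[rule_format] by (intro approximates_table_lookup approximates_Phi)
qed

definition app_stage :: "nat set \<Rightarrow> rf \<Rightarrow> rf \<Rightarrow> rf \<Rightarrow> rf \<Rightarrow> rf \<Rightarrow> nat \<Rightarrow> nat \<Rightarrow> nat \<Rightarrow> nat" where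
  "app_stage Y c0 c cg d dg k s n =
     beval d (join_approx (stage_eval Y dg s) (\<lambda>q. table_lookup (iterate_table Y c0 c cg s n) q s)) s [k]"

lemma approximates_app_stage:
  assumes h0: "\<forall>q. h 0 q = Phi e0 (set_orc Y) q" and g: "\<forall>q. g q = Phi eg (set_orc Y) q"
    and step: "\<forall>n q. h (Suc n) q = Phi e (ojoin g (h n)) q"
    and a: "\<forall>q. a q = Phi ea (set_orc Y) q"
  shows "approximates (\<lambda>s. app_stage Y (from_nat e0) (from_nat e) (from_nat eg) (from_nat d) (from_nat ea) k s n)
    (Phi d (ojoin a (h n)) k)"
  unfolding app_stage_def
  using approximates_stage_eval a approximates_iterate_table[OF h0 g step]
  by (intro approximates_Phi approximates_join_approx) simp_all

definition set_approx_rf :: rf where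
  "set_approx_rf = Comp Succ [Orc]"

lemma ev_set_approx_rf: "ev (set_orc Y) set_approx_rf (x # ps) (set_approx Y x)"
  unfolding set_approx_rf_def set_approx_def
  by (rule ev_CompI[OF ev_args_Cons[OF _ list.rel_intros(1)] ev_Succ]) (rule ev_Orc, simp add: set_orc_def)

definition stage_eval_rf :: "rf \<Rightarrow> rf" where
  "stage_eval_rf c = compile_beval c set_approx_rf 2 1"

lemma ev_stage_eval_rf: "ev (set_orc Y) (stage_eval_rf c) [q, s, T] (stage_eval Y c s q)"
  using ev_compile_beval[of "[s, T]" 2 "set_orc Y" set_approx_rf "set_approx Y" "[q]" 1 c] ev_set_approx_rf
  by (simp add: stage_eval_rf_def stage_eval_def)

definition table_lookup_rf :: rf where
  "table_lookup_rf = Comp ifz_rf [Comp monus_rf [Comp Succ [Proj 1], Proj 2],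
     Comp mod_rf [Comp div_rf [Proj 0, Comp pow_rf [Comp Succ [Comp Succ [Proj 2]], Proj 1]],
       Comp Succ [Comp Succ [Proj 2]]],
     Zero]"

lemma ev_table_lookup_rf: "ev Q table_lookup_rf [T, q, s] (table_lookup T q s)"
proof -
  have "ev Q table_lookup_rf [T, q, s] (if Suc q - s = 0 then T div Suc (Suc s) ^ q mod Suc (Suc s) else 0)"
    unfolding table_lookup_rf_def
    by (rule ev_rf_intros ev_ifz_rf ev_monus_rf ev_mod_rf ev_div_rf ev_pow_rf | simp)+
  also have "\<dots> = table_lookup T q s" by (simp add: table_lookup_def)
  finally show ?thesis .
qed

definition table_join_rf :: "rf \<Rightarrow> rf" where
  "table_join_rf cg = Comp ifz_rf [Comp mod_rf [Proj 0, const_rf 2],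
     Comp cg [Comp div_rf [Proj 0, const_rf 2], Proj 1, Proj 2],
     Comp table_lookup_rf [Proj 2, Comp div_rf [Proj 0, const_rf 2], Proj 1]]"

lemma ev_table_join_rf:
  "ev (set_orc Y) (table_join_rf (stage_eval_rf c)) [q, s, T]
    (join_approx (stage_eval Y c s) (\<lambda>q. table_lookup T q s) q)"
  unfolding table_join_rf_def join_approx_def
  by (rule ev_rf_intros ev_ifz_rf ev_mod_rf ev_div_rf ev_const_rf ev_stage_eval_rf ev_table_lookup_rf | simp)+

definition join_eval_rf :: "rf \<Rightarrow> rf \<Rightarrow> rf" where
  "join_eval_rf c cg = compile_beval c (table_join_rf (stage_eval_rf cg)) 2 1"

lemma ev_join_eval_rf:
  "ev (set_orc Y) (join_eval_rf c cg) [x, s, T]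
    (beval c (join_approx (stage_eval Y cg s) (\<lambda>q. table_lookup T q s)) s [x])"
  using ev_compile_beval[of "[s, T]" 2 "set_orc Y" "table_join_rf (stage_eval_rf cg)"
      "join_approx (stage_eval Y cg s) (\<lambda>q. table_lookup T q s)" "[x]" 1 c]
    ev_table_join_rf
  by (simp add: join_eval_rf_def)

definition stage_cap_rf :: rf where
  "stage_cap_rf = Comp ifz_rf [Comp monus_rf [Proj 0, Comp Succ [Proj 1]], Proj 0, Zero]"

lemma ev_stage_cap_rf: "ev Q stage_cap_rf [r, s] (stage_cap s r)"
proof -
  have "ev Q stage_cap_rf [r, s] (if r - Suc s = 0 then r else 0)"
    unfolding stage_cap_rf_def by (rule ev_rf_intros ev_ifz_rf ev_monus_rf)+
  also have "\<dots> = stage_cap s r" by (simp add: stage_cap_def)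
  finally show ?thesis .
qed

definition table_code_rf :: "rf \<Rightarrow> rf" where
  "table_code_rf d = Comp (Prec Zero (Comp add_rf [Proj 1, Comp mult_rf
     [Comp stage_cap_rf [Comp d [Proj 0, Proj 2, Proj 3], Proj 2],
      Comp pow_rf [Comp Succ [Comp Succ [Proj 2]], Proj 0]]]))
     [Proj 0, Proj 0, Proj 1]"

lemma ev_table_code_rf:
  assumes "\<And>t. ev Q d [t, s, T] (D t)"
  shows "ev Q (table_code_rf d) [s, T] (table_code s D)"
proof -
  have "ev Q (table_code_rf d) [s, T] (rec_nat 0 (\<lambda>t acc. acc + stage_cap s (D t) * Suc (Suc s) ^ t) s)"
    unfolding table_code_rf_def
    by (rule ev_rf_intros ev_Prec_rec_nat ev_add_rf ev_mult_rf ev_pow_rf ev_stage_cap_rf assms)+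
  also have "rec_nat 0 (\<lambda>t acc. acc + stage_cap s (D t) * Suc (Suc s) ^ t) n
      = (\<Sum>t<n. stage_cap s (D t) * Suc (Suc s) ^ t)" for n
    by (induction n) simp_all
  finally show ?thesis unfolding table_code_def .
qed

definition iterate_table_rf :: "rf \<Rightarrow> rf \<Rightarrow> rf \<Rightarrow> rf" where
  "iterate_table_rf c0 c cg = Prec (Comp (table_code_rf (stage_eval_rf c0)) [Proj 0, Zero])
     (Comp (table_code_rf (join_eval_rf c cg)) [Proj 2, Proj 1])"

lemma ev_iterate_table_rf: "ev (set_orc Y) (iterate_table_rf c0 c cg) [n, s] (iterate_table Y c0 c cg s n)"
  unfolding iterate_table_rf_def iterate_table_def
  by (rule ev_rf_intros ev_Prec_rec_nat ev_table_code_rf ev_stage_eval_rf ev_join_eval_rf)+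

definition app_stage_rf :: "rf \<Rightarrow> rf \<Rightarrow> rf \<Rightarrow> rf \<Rightarrow> rf \<Rightarrow> nat \<Rightarrow> rf" where
  "app_stage_rf c0 c cg d dg k =
     Comp (join_eval_rf d dg) [const_rf k, Proj 0, Comp (iterate_table_rf c0 c cg) [Proj 1, Proj 0]]"

lemma ev_app_stage_rf: "ev (set_orc Y) (app_stage_rf c0 c cg d dg k) [s, n] (app_stage Y c0 c cg d dg k s n)"
  unfolding app_stage_rf_def app_stage_def
  by (rule ev_rf_intros ev_const_rf ev_iterate_table_rf ev_join_eval_rf)+

definition stage_computable :: "nat set \<Rightarrow> (nat \<Rightarrow> nat option) \<Rightarrow> bool" where
  "stage_computable Y r \<longleftrightarrow>
     (\<exists>U u. (\<forall>s n. ev (set_orc Y) U [s, n] (u n s)) \<and> (\<forall>n. approximates (u n) (r n)))"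

lemma stage_computable_app_iterate:
  assumes "Z_computable Y (h 0)" and "Z_computable Y g" and "Z_computable Y a"
    and step: "\<forall>n q. h (Suc n) q = Phi e (ojoin g (h n)) q"
  shows "stage_computable Y (\<lambda>n. Phi d (ojoin a (h n)) k)"
proof -
  obtain e0 eg ea where "\<forall>q. h 0 q = Phi e0 (set_orc Y) q" "\<forall>q. g q = Phi eg (set_orc Y) q"
    "\<forall>q. a q = Phi ea (set_orc Y) q"
    using assms(1-3) unfolding Z_computable_def by metis
  note approx = approximates_app_stage[OF this(1,2) step this(3)]
  show ?thesis unfolding stage_computable_def
    by (intro exI[of _ "app_stage_rf (from_nat e0) (from_nat e) (from_nat eg) (from_nat d) (from_nat ea) k"]
        exI[of _ "\<lambda>n s. app_stage Y (from_nat e0) (from_nat e) (from_nat eg) (from_nat d) (from_nat ea) k s n"])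
      (simp add: ev_app_stage_rf approx)
qed

section \<open>Deciding a set by a race\<close>

definition race_rf :: "rf \<Rightarrow> rf \<Rightarrow> nat \<Rightarrow> rf" where
  "race_rf U W t = Comp
     (Comp ifz_rf [U, Comp monus_rf [const_rf 1, Comp eq_rf [W, const_rf t]], Comp eq_rf [U, const_rf t]])
     [Mu (Comp ifz_rf [Comp add_rf [U, W], const_rf 1, Zero]), Proj 0]"

lemma ev_race_rf:
  assumes U: "\<And>s. ev Q U [s, n] (u s)" and W: "\<And>s. ev Q W [s, n] (w s)"
    and ex: "\<exists>s. u s + w s \<noteq> 0"
  obtains s0 where "u s0 + w s0 \<noteq> 0"
    and "ev Q (race_rf U W t) [n]
      (if u s0 = 0 then 1 - (if w s0 = t then 1 else 0) else if u s0 = t then 1 else 0)"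
proof
  define s0 where "s0 = (LEAST s. u s + w s \<noteq> 0)"
  show s0: "u s0 + w s0 \<noteq> 0" using ex unfolding s0_def by (rule LeastI_ex)
  have below: "u m + w m = 0" if "m < s0" for m
    using not_less_Least[OF that[unfolded s0_def]] by simp
  let ?check = "Comp ifz_rf [Comp add_rf [U, W], const_rf 1, Zero]"
  have check: "ev Q ?check [s, n] (if u s + w s = 0 then 1 else 0)" for s
    by (rule ev_rf_intros ev_ifz_rf ev_add_rf U W ev_const_rf)+
  have search: "ev Q (Mu ?check) [n] s0"
  proof (rule ev_Mu)
    show "ev Q ?check [s0, n] 0" using check[of s0] by (simp only: if_not_P[OF s0])
    show "\<forall>m<s0. \<exists>y>0. ev Q ?check [m, n] y"
      using check below by (metis zero_less_one)
  qed
  show "ev Q (race_rf U W t) [n]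
      (if u s0 = 0 then 1 - (if w s0 = t then 1 else 0) else if u s0 = t then 1 else 0)"
    unfolding race_rf_def by (rule ev_rf_intros ev_ifz_rf ev_monus_rf ev_eq_rf ev_const_rf U W search)+
qed

text \<open>Search for a stage at which one of the two approximations converges; since \<open>r1 \<noteq> r2\<close>,
  the value found tells on which side of the \<open>if\<close> we are.\<close>

lemma turing_le_race:
  assumes "stage_computable Y (\<lambda>n. if n \<in> X then r1 else r2)"
    and "stage_computable Y (\<lambda>n. if n \<in> X then r2 else r1)"
    and r12: "r1 \<noteq> r2"
  shows "X \<le>\<^sub>T Y"
proof -
  obtain U u W w where
    u: "\<forall>s n. ev (set_orc Y) U [s, n] (u n s)" "\<forall>n. approximates (u n) (if n \<in> X then r1 else r2)"
    and w: "\<forall>s n. ev (set_orc Y) W [s, n] (w n s)" "\<forall>n. approximates (w n) (if n \<in> X then r2 else r1)"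
    using assms(1,2) unfolding stage_computable_def by blast
  define t where "t = (case r1 of None \<Rightarrow> 0 | Some v \<Rightarrow> Suc v)"
  have t: "Suc v = t \<longleftrightarrow> r1 = Some v" for v by (cases r1) (auto simp: t_def)
  have "ev (set_orc Y) (race_rf U W t) [n] (if n \<in> X then 1 else 0)" for n
  proof -
    have "\<exists>v. r1 = Some v \<or> r2 = Some v" using r12 by (cases r1) (auto simp: eq_commute[of None])
    then obtain v where "(if n \<in> X then r1 else r2) = Some v \<or> (if n \<in> X then r2 else r1) = Some v"
      by (cases "n \<in> X") auto
    then have "eventually (\<lambda>s. u n s = Suc v) sequentially \<or> eventually (\<lambda>s. w n s = Suc v) sequentially"
      using u(2) w(2) unfolding approximates_def by blast
    then have ex: "\<exists>s. u n s + w n s \<noteq> 0"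
      unfolding eventually_sequentially by (metis add_is_0 nat.distinct(1) order_refl)
    obtain s0 where nz: "u n s0 + w n s0 \<noteq> 0" and race: "ev (set_orc Y) (race_rf U W t) [n]
        (if u n s0 = 0 then 1 - (if w n s0 = t then 1 else 0) else if u n s0 = t then 1 else 0)"
      by (rule ev_race_rf[where t=t, OF u(1)[rule_format] w(1)[rule_format] ex])
    have "(if u n s0 = 0 then 1 - (if w n s0 = t then 1 else 0) else if u n s0 = t then 1 else 0)
        = (if n \<in> X then 1 else 0 :: nat)"
    proof (cases "u n s0")
      case (Suc v)
      then have "(if n \<in> X then r1 else r2) = Some v" using u(2) by (auto simp: approximates_def)
      with Suc show ?thesis using t r12 by (cases "n \<in> X") simp_all
    next
      case 0
      with nz obtain v where "w n s0 = Suc v" by (cases "w n s0") auto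
      moreover from this have "(if n \<in> X then r2 else r1) = Some v" using w(2) by (auto simp: approximates_def)
      ultimately show ?thesis using 0 t r12 by (cases "n \<in> X") simp_all
    qed
    with race show ?thesis by simp
  qed
  then show ?thesis unfolding turing_le_def by (metis Phi_eqI from_nat_to_nat)
qed

section \<open>Relativisation\<close>

primrec subst_oracle :: "rf \<Rightarrow> rf \<Rightarrow> rf" where
  "subst_oracle r Zero = Zero"
| "subst_oracle r Succ = Succ"
| "subst_oracle r (Proj i) = Proj i"
| "subst_oracle r (Comp f gs) = Comp (subst_oracle r f) (map (subst_oracle r) gs)"
| "subst_oracle r (Prec f g) = Prec (subst_oracle r f) (subst_oracle r g)"
| "subst_oracle r (Mu f) = Mu (subst_oracle r f)"
| "subst_oracle r Orc = Comp r [Proj 0]"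

lemma ev_subst_oracle:
  assumes r: "\<And>x y. ev Q' r [x] y \<longleftrightarrow> Q x = Some y"
  shows "ev Q c xs y \<Longrightarrow> ev Q' (subst_oracle r c) xs y"
proof (induction rule: ev.induct)
  case (ev_Orc x y xs)
  then show ?case using r by (auto intro: ev_CompI[OF ev_args_Cons[OF ev_Proj_0 list.rel_intros(1)]])
next
  case (ev_Comp ys gs xs f z)
  then show ?case by (auto intro!: ev.ev_Comp)
next
  case (ev_Mu f n xs)
  then show ?case by (auto intro!: ev.ev_Mu)
qed (auto intro: ev.intros)

lemma ev_subst_oracleD:
  assumes r: "\<And>x y. ev Q' r [x] y \<longleftrightarrow> Q x = Some y"
  shows "ev Q' d xs y \<Longrightarrow> d = subst_oracle r c \<Longrightarrow> ev Q c xs y"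
proof (induction arbitrary: c rule: ev.induct)
  case (ev_Zero xs)
  then show ?case by (cases c) (auto intro: ev.ev_Zero)
next
  case (ev_Succ x xs)
  then show ?case by (cases c) (auto intro: ev.ev_Succ)
next
  case (ev_Proj i xs)
  then show ?case by (cases c) (auto intro: ev.ev_Proj)
next
  case (ev_Orc x y xs)
  then show ?case by (cases c) auto
next
  case (ev_Comp ys gs xs f z)
  show ?case
  proof (cases c)
    case Orc
    with ev_Comp.prems have "f = r" "gs = [Proj 0]" by auto
    with ev_Comp.hyps(1) ev_Comp.IH(1) obtain a where a: "ys = [a]" "ev Q' (Proj 0) xs a"
      by (cases ys) auto
    from a(2) obtain xs' where "xs = a # xs'"
      by (cases rule: ev.cases) (auto simp: neq_Nil_conv)
    with ev_Comp.hyps(2) a(1) \<open>f = r\<close> show ?thesis using Orc r by (auto intro: ev.ev_Orc)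
  next
    case (Comp f0 gs0)
    with ev_Comp.prems show ?thesis using ev_Comp.hyps(1) ev_Comp.IH by (auto intro!: ev.ev_Comp)
  qed (use ev_Comp.prems in auto)
next
  case (ev_Prec0 f xs y g)
  then show ?case by (cases c) (auto intro: ev.ev_Prec0)
next
  case (ev_PrecS f g n xs y z)
  then obtain f0 g0 where c: "c = Prec f0 g0" "f = subst_oracle r f0" "g = subst_oracle r g0"
    by (cases c) auto
  show ?case unfolding c(1)
    by (rule ev.ev_PrecS[OF ev_PrecS.IH(1) ev_PrecS.IH(2)]) (simp_all add: c)
next
  case (ev_Mu f n xs)
  then obtain f0 where c: "c = Mu f0" "f = subst_oracle r f0" by (cases c) auto
  show ?case unfolding c(1)
    by (rule ev.ev_Mu) (use ev_Mu.IH c in blast)+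
qed

lemma Z_computable_mono:
  assumes XY: "X \<le>\<^sub>T Y" and \<phi>: "Z_computable X \<phi>"
  shows "Z_computable Y \<phi>"
proof -
  obtain e where e: "\<forall>n. Phi e (set_orc Y) n = Some (if n \<in> X then 1 else 0)"
    using XY unfolding turing_le_def by blast
  have r: "ev (set_orc Y) (from_nat e) [x] y \<longleftrightarrow> set_orc X x = Some y" for x y
    using e Phi_eqI Phi_SomeD by (metis option.inject set_orc_def)
  obtain e' where e': "\<forall>n. \<phi> n = Phi e' (set_orc X) n" using \<phi> unfolding Z_computable_def by blast
  have "ev (set_orc Y) (subst_oracle (from_nat e) (from_nat e')) [n] y \<longleftrightarrow> ev (set_orc X) (from_nat e') [n] y"
    for n y using ev_subst_oracle[OF r] ev_subst_oracleD[OF r] by blast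
  then have "\<forall>n. \<phi> n = Phi (to_nat (subst_oracle (from_nat e) (from_nat e'))) (set_orc Y) n"
    using e' by (simp add: Phi_def)
  then show ?thesis unfolding Z_computable_def by blast
qed

definition const_elem :: "nat \<Rightarrow> nat \<Rightarrow> nat option" where
  "const_elem c = (\<lambda>k. Some c)"

lemma const_elem_eq_iff: "const_elem a = const_elem b \<longleftrightarrow> a = b"
  by (auto simp: const_elem_def dest: fun_cong)

lemma const_elem_in_B_carrier: "const_elem c \<in> B_carrier Z"
  unfolding B_carrier_def Z_computable_def const_elem_def
  by (auto intro!: exI[of _ "to_nat (const_rf c)"] Phi_eqI[symmetric] ev_const_rf)

text \<open>\<open>fun_elem v\<close> applied to the numeral \<open>const_elem n\<close> gives \<open>const_elem (v n)\<close>: its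
  code reads \<open>n\<close> off the argument at oracle position \<open>1\<close> and returns its own value at
  position \<open>2 (n + 1)\<close>.\<close>

definition fun_elem_code :: rf where
  "fun_elem_code = Comp Orc [Comp add_rf [Comp Succ [Comp Orc [const_rf 1]], Comp Succ [Comp Orc [const_rf 1]]]]"

definition fun_elem :: "(nat \<Rightarrow> nat) \<Rightarrow> nat \<Rightarrow> nat option" where
  "fun_elem v = (\<lambda>k. if k = 0 then Some (to_nat fun_elem_code) else Some (v (k - 1)))"

lemma ev_Orc_const_elem: "ev (ojoin \<psi> (const_elem n)) (Comp Orc [const_rf 1]) [k] n"
  by (rule ev_CompI[OF ev_args_Cons[OF ev_const_rf list.rel_intros(1)]], rule ev_Orc)
    (simp add: ojoin_def const_elem_def)

lemma B_app_fun_elem: "B_app (fun_elem v) (const_elem n) = Some (const_elem (v n))"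
proof -
  let ?Q = "ojoin (fun_elem v) (const_elem n)"
  have "ev ?Q (Comp Succ [Comp Orc [const_rf 1]]) [k] (Suc n)" for k
    by (rule ev_CompI[OF ev_args_Cons[OF ev_Orc_const_elem list.rel_intros(1)] ev_Succ])
  then have "ev ?Q (Comp add_rf [Comp Succ [Comp Orc [const_rf 1]], Comp Succ [Comp Orc [const_rf 1]]])
      [k] (Suc n + Suc n)" for k
    by (intro ev_CompI[OF _ ev_add_rf] ev_args_Cons list.rel_intros(1))
  then have "ev ?Q fun_elem_code [k] (v n)" for k
    unfolding fun_elem_code_def
    by (rule ev_CompI[OF ev_args_Cons[OF _ list.rel_intros(1)]], intro ev_Orc)
      (simp add: ojoin_def fun_elem_def)
  then show ?thesis by (auto simp: B_app_def fun_elem_def const_elem_def intro!: ext Phi_eqI)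
qed

lemma fun_elem_in_B_carrier:
  assumes "\<And>n. ev (set_orc Z) p [n] (v n)"
  shows "fun_elem v \<in> B_carrier Z"
proof -
  let ?p = "Prec (const_rf (to_nat fun_elem_code)) (Comp p [Proj 0])"
  have "ev (set_orc Z) ?p [k] (rec_nat (to_nat fun_elem_code) (\<lambda>j r. v j) k)" for k
    by (rule ev_Prec_rec_nat ev_const_rf ev_rf_intros assms)+
  then have "Phi (to_nat ?p) (set_orc Z) k = Some (rec_nat (to_nat fun_elem_code) (\<lambda>j r. v j) k)" for k
    by (intro Phi_eqI) simp
  then have "fun_elem v k = Phi (to_nat ?p) (set_orc Z) k" for k
    by (cases k) (simp_all add: fun_elem_def)
  then show ?thesis unfolding B_carrier_def Z_computable_def by blast
qed

lemma pca_embedding_app_code: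
  assumes f: "pca_embedding (B_carrier X) B_app (B_carrier Y) B_app f"
    and a: "a \<in> B_carrier X" and app: "\<And>n. B_app a (const_elem n) = Some (const_elem (v n))"
    and "v n1 \<noteq> v n2"
  obtains e where "\<And>n q. f (const_elem (v n)) q = Phi e (ojoin (f a) (f (const_elem n))) q"
proof -
  have hom: "\<forall>a\<in>B_carrier X. \<forall>b\<in>B_carrier X. \<forall>c. B_app a b = Some c \<longrightarrow> B_app (f a) (f b) = Some (f c)"
    and inj: "inj_on f (B_carrier X)"
    using f by (simp_all add: pca_embedding_def)
  have fv: "f (const_elem (v n)) =
      (\<lambda>q. case f a 0 of None \<Rightarrow> None | Some e \<Rightarrow> Phi e (ojoin (f a) (f (const_elem n))) q)" for n
  proof -
    have "B_app (f a) (f (const_elem n)) = Some (f (const_elem (v n)))"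
      using hom a app const_elem_in_B_carrier by blast
    then show ?thesis by (simp add: B_app_def)
  qed
  have "f (const_elem (v n1)) \<noteq> f (const_elem (v n2))"
    using \<open>v n1 \<noteq> v n2\<close> by (simp add: inj_on_eq_iff[OF inj] const_elem_in_B_carrier const_elem_eq_iff)
  then obtain e where "f a 0 = Some e" using fv by (cases "f a 0") auto
  with fv that show ?thesis by simp
qed

lemma turing_le_trivial: "X = {} \<or> X = UNIV \<Longrightarrow> X \<le>\<^sub>T Y"
proof (elim disjE)
  assume "X = {}"
  then have "\<forall>n. Phi (to_nat (const_rf 0)) (set_orc Y) n = Some (if n \<in> X then 1 else 0)"
    by (simp add: Phi_eqI ev_const_rf)
  then show ?thesis unfolding turing_le_def by blast
next
  assume "X = UNIV"
  then have "\<forall>n. Phi (to_nat (const_rf 1)) (set_orc Y) n = Some (if n \<in> X then 1 else 0)"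
    by (simp add: Phi_eqI ev_const_rf)
  then show ?thesis unfolding turing_le_def by blast
qed

lemma pca_embedding_Z_computable:
  "pca_embedding (B_carrier X) B_app (B_carrier Y) B_app f \<Longrightarrow> a \<in> B_carrier X \<Longrightarrow> Z_computable Y (f a)"
  unfolding pca_embedding_def B_carrier_def by auto

lemma pca_embedding_stage_computable:
  assumes f: "pca_embedding (B_carrier X) B_app (B_carrier Y) B_app f"
    and a: "a \<in> B_carrier X" and g: "\<And>n q. g n q = Phi d (ojoin (f a) (f (const_elem n))) q"
  shows "stage_computable Y (\<lambda>n. g n k)"
proof -
  have succ: "fun_elem Suc \<in> B_carrier X" by (rule fun_elem_in_B_carrier, rule ev_Succ)
  obtain e where "\<And>n q. f (const_elem (Suc n)) q = Phi e (ojoin (f (fun_elem Suc)) (f (const_elem n))) q"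
    using pca_embedding_app_code[OF f succ B_app_fun_elem, of 0 1] by auto
  then have "stage_computable Y (\<lambda>n. Phi d (ojoin (f a) (f (const_elem n))) k)"
    by (intro stage_computable_app_iterate[where g = "f (fun_elem Suc)" and e = e]
        pca_embedding_Z_computable[OF f] const_elem_in_B_carrier succ a) simp
  then show ?thesis by (simp add: g)
qed

lemma turing_le_of_pca_embedding:
  assumes f: "pca_embedding (B_carrier X) B_app (B_carrier Y) B_app f"
  shows "X \<le>\<^sub>T Y"
proof (cases "X = {} \<or> X = UNIV")
  case False
  then obtain x0 x1 where "x0 \<notin> X" "x1 \<in> X" by blast
  let ?h = "\<lambda>n. f (const_elem n)"
  let ?\<chi> = "\<lambda>n. if n \<in> X then 1 else 0 :: nat" and ?\<chi>' = "\<lambda>n. if n \<in> X then 0 else 1 :: nat"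
  have "ev (set_orc X) Orc [n] (?\<chi> n)" for n by (rule ev_Orc) (simp add: set_orc_def)
  moreover have "ev (set_orc X) (Comp monus_rf [const_rf 1, Orc]) [n] (?\<chi>' n)" for n
  proof -
    have "ev (set_orc X) (Comp monus_rf [const_rf 1, Orc]) [n] (1 - ?\<chi> n)"
      by (rule ev_rf_intros ev_monus_rf ev_const_rf ev_Orc | simp add: set_orc_def)+
    also have "1 - ?\<chi> n = ?\<chi>' n" by simp
    finally show ?thesis .
  qed
  ultimately have elems: "fun_elem ?\<chi> \<in> B_carrier X" "fun_elem ?\<chi>' \<in> B_carrier X"
    by (blast intro: fun_elem_in_B_carrier)+
  obtain d where "\<And>n q. ?h (?\<chi> n) q = Phi d (ojoin (f (fun_elem ?\<chi>)) (?h n)) q"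
    using pca_embedding_app_code[OF f elems(1) B_app_fun_elem, of x0 x1] \<open>x0 \<notin> X\<close> \<open>x1 \<in> X\<close> by auto
  from pca_embedding_stage_computable[OF f elems(1) this]
  have in_X: "stage_computable Y (\<lambda>n. if n \<in> X then ?h 1 k else ?h 0 k)" for k
    by (simp add: if_distrib if_distribR)
  obtain d' where "\<And>n q. ?h (?\<chi>' n) q = Phi d' (ojoin (f (fun_elem ?\<chi>')) (?h n)) q"
    using pca_embedding_app_code[OF f elems(2) B_app_fun_elem, of x0 x1] \<open>x0 \<notin> X\<close> \<open>x1 \<in> X\<close> by auto
  from pca_embedding_stage_computable[OF f elems(2) this]
  have not_in_X: "stage_computable Y (\<lambda>n. if n \<in> X then ?h 0 k else ?h 1 k)" for k
    by (simp add: if_distrib if_distribR)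
  have "inj_on f (B_carrier X)" using f by (simp add: pca_embedding_def)
  then have "?h 1 \<noteq> ?h 0"
    by (simp add: inj_on_eq_iff const_elem_in_B_carrier const_elem_eq_iff)
  then obtain k where "?h 1 k \<noteq> ?h 0 k" by blast
  with in_X not_in_X show ?thesis by (rule turing_le_race)
qed (rule turing_le_trivial)

theorem theorem6p12:
  fixes X Y :: "nat set"
  shows "(\<exists>f. pca_embedding (B_carrier X) B_app (B_carrier Y) B_app f) \<longleftrightarrow> X \<le>\<^sub>T Y"
proof
  assume "\<exists>f. pca_embedding (B_carrier X) B_app (B_carrier Y) B_app f"
  then show "X \<le>\<^sub>T Y" using turing_le_of_pca_embedding by blast
next
  assume "X \<le>\<^sub>T Y"
  then have "B_carrier X \<subseteq> B_carrier Y" by (auto simp: B_carrier_def intro: Z_computable_mono)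
  then have "pca_embedding (B_carrier X) B_app (B_carrier Y) B_app id"
    by (auto simp: pca_embedding_def)
  then show "\<exists>f. pca_embedding (B_carrier X) B_app (B_carrier Y) B_app f" by blast
qed

end
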